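(* For a graph $G$ without isolated vertices, the following are equivalent: (1) $G$ is very well-covered; (2) $G$ has a perfect matching every edge of which (as a $2$-vertex set) is a strong clique; (3) $G$ has a perfect matching, and every edge of every perfect matching of $G$ is a strong clique; (4) $V(G)$ admits a partition into strong cliques of size two. In particular, every very well-covered graph is localizable.
   Context: A clique is strong if it intersects every maximal independent set. A graph is localizable if its vertex set admits a partition into strong cliques. A graph is well-covered if all its maximal independent sets have the same size; it is very well-covered if it is well-covered, has no isolated vertices, and $\alpha(G)=|V(G)|/2$, where $\alpha(G)$ is the independence number. *)

theory Defs
  imports Main "HOL-Library.Disjoint_Sets"
begin

definition graph :: "'a set \<Rightarrow> ('a \<Rightarrow> 'a \<Rightarrow> bool) \<Rightarrow> bool" where
  "graph V E \<longleftrightarrow> finite V \<and> (\<forall>u v. E u v \<longrightarrow> u \<in> V \<and> v \<in> V)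
     \<and> (\<forall>u v. E u v \<longrightarrow> E v u) \<and> (\<forall>u. \<not> E u u)"

definition no_isolated :: "'a set \<Rightarrow> ('a \<Rightarrow> 'a \<Rightarrow> bool) \<Rightarrow> bool" where
  "no_isolated V E \<longleftrightarrow> (\<forall>v\<in>V. \<exists>u. E v u)"

definition independent :: "'a set \<Rightarrow> ('a \<Rightarrow> 'a \<Rightarrow> bool) \<Rightarrow> 'a set \<Rightarrow> bool" where
  "independent V E S \<longleftrightarrow> S \<subseteq> V \<and> (\<forall>u\<in>S. \<forall>v\<in>S. \<not> E u v)"

definition max_independent :: "'a set \<Rightarrow> ('a \<Rightarrow> 'a \<Rightarrow> bool) \<Rightarrow> 'a set \<Rightarrow> bool" where
  "max_independent V E S \<longleftrightarrow> independent V E S \<and>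
     (\<forall>T. independent V E T \<and> S \<subseteq> T \<longrightarrow> T = S)"

definition clique :: "'a set \<Rightarrow> ('a \<Rightarrow> 'a \<Rightarrow> bool) \<Rightarrow> 'a set \<Rightarrow> bool" where
  "clique V E C \<longleftrightarrow> C \<subseteq> V \<and> (\<forall>u\<in>C. \<forall>v\<in>C. u \<noteq> v \<longrightarrow> E u v)"

definition strong_clique :: "'a set \<Rightarrow> ('a \<Rightarrow> 'a \<Rightarrow> bool) \<Rightarrow> 'a set \<Rightarrow> bool" where
  "strong_clique V E C \<longleftrightarrow> clique V E C \<and>
     (\<forall>S. max_independent V E S \<longrightarrow> C \<inter> S \<noteq> {})"

definition localizable :: "'a set \<Rightarrow> ('a \<Rightarrow> 'a \<Rightarrow> bool) \<Rightarrow> bool" where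
  "localizable V E \<longleftrightarrow> (\<exists>P. partition_on V P \<and> (\<forall>C\<in>P. strong_clique V E C))"

definition well_covered :: "'a set \<Rightarrow> ('a \<Rightarrow> 'a \<Rightarrow> bool) \<Rightarrow> bool" where
  "well_covered V E \<longleftrightarrow> (\<forall>S T. max_independent V E S \<and> max_independent V E T
      \<longrightarrow> card S = card T)"

definition independence_number :: "'a set \<Rightarrow> ('a \<Rightarrow> 'a \<Rightarrow> bool) \<Rightarrow> nat" where
  "independence_number V E = Max (card ` {S. independent V E S})"

definition very_well_covered :: "'a set \<Rightarrow> ('a \<Rightarrow> 'a \<Rightarrow> bool) \<Rightarrow> bool" where
  "very_well_covered V E \<longleftrightarrow> well_covered V E \<and> no_isolated V E \<and>
     2 * independence_number V E = card V"

definition perfect_matching :: "'a set \<Rightarrow> ('a \<Rightarrow> 'a \<Rightarrow> bool) \<Rightarrow> 'a set set \<Rightarrow> bool" where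
  "perfect_matching V E M \<longleftrightarrow> (\<forall>e\<in>M. \<exists>u v. e = {u, v} \<and> E u v)
     \<and> disjoint M \<and> \<Union>M = V"

end

theory Submission
  imports Defs
begin

text \<open>
  For a perfect matching M and an independent set S we have |S| = \<Sum>e\<in>M. |e \<inter> S| \<le> |M|, with
  equality iff S meets every edge of M. If every edge of M is strong, all maximal independent sets
  therefore have |M| = |V|/2 elements; conversely, if G is very well-covered, a maximal independent
  set missing an edge of M would have fewer than |V|/2 elements. The real work is the existence of
  a perfect matching in a very well-covered graph: in a well-covered graph without isolated vertices
  every independent set I satisfies |I| \<le> |N(I)|, so by Hall's theorem a maximum independent set S,
  of size |V|/2, can be matched into V - S.
\<close>

section \<open>Hall's marriage theorem\<close>

definition hall_condition :: "'a set \<Rightarrow> ('a \<Rightarrow> 'b set) \<Rightarrow> bool" where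
  "hall_condition S N \<longleftrightarrow> (\<forall>A\<subseteq>S. card A \<le> card (\<Union>(N ` A)))"

lemma hall_condition_subset: "hall_condition S N \<Longrightarrow> A \<subseteq> S \<Longrightarrow> hall_condition A N"
  unfolding hall_condition_def by blast

lemma hall_condition_Diff_critical:
  assumes S: "finite S" and N: "\<forall>s\<in>S. finite (N s)" and hall: "hall_condition S N"
    and A: "A \<subseteq> S" and critical: "card (\<Union>(N ` A)) \<le> card A"
  shows "hall_condition (S - A) (\<lambda>s. N s - \<Union>(N ` A))"
  unfolding hall_condition_def
proof (intro allI impI)
  fix C assume C: "C \<subseteq> S - A"
  let ?U = "\<Union>(N ` A)" and ?W = "\<Union>(N ` (C \<union> A))"
  have fin: "finite C" "finite A" using S A C by (auto intro: finite_subset)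
  then have fin_W: "finite ?W" using N A C by auto
  have "card C + card A = card (C \<union> A)" using C fin by (intro card_Un_disjoint[symmetric]) auto
  also have "\<dots> \<le> card ?W" using hall A C unfolding hall_condition_def by blast
  finally have "card C + card A \<le> card ?W" .
  moreover have "card (?W - ?U) = card ?W - card ?U"
    using fin_W by (intro card_Diff_subset) (auto intro: finite_subset[of ?U ?W])
  ultimately have "card C \<le> card (?W - ?U)" using critical by linarith
  moreover have "?W - ?U = \<Union>((\<lambda>s. N s - ?U) ` C)" by auto
  ultimately show "card C \<le> card (\<Union>((\<lambda>s. N s - ?U) ` C))" by simp
qed

lemma hall_condition_Diff_singleton:
  assumes no_critical: "\<forall>C\<subseteq>S. C \<noteq> {} \<longrightarrow> C \<noteq> S \<longrightarrow> card C < card (\<Union>(N ` C))"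
    and a: "a \<in> S"
  shows "hall_condition (S - {a}) (\<lambda>s. N s - {b})"
  unfolding hall_condition_def
proof (intro allI impI)
  fix C assume C: "C \<subseteq> S - {a}"
  show "card C \<le> card (\<Union>((\<lambda>s. N s - {b}) ` C))"
  proof (cases "C = {}")
    case False
    moreover have "C \<noteq> S" using C a by blast
    ultimately have "card C < card (\<Union>(N ` C))" using no_critical C by blast
    then have "card C \<le> card (\<Union>(N ` C)) - 1" by linarith
    also have "\<dots> \<le> card (\<Union>(N ` C) - {b})" by (simp add: card_Diff_singleton_if)
    also have "\<Union>(N ` C) - {b} = \<Union>((\<lambda>s. N s - {b}) ` C)" by blast
    finally show ?thesis .
  qed simp
qed

lemma inj_on_if_disjoint_images:
  assumes f: "inj_on f A" "f ` A \<subseteq> U" and g: "inj_on g B" "g ` B \<inter> U = {}"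
  shows "inj_on (\<lambda>x. if x \<in> A then f x else g x) (A \<union> B)"
proof (rule inj_onI)
  fix x y assume x: "x \<in> A \<union> B" and y: "y \<in> A \<union> B"
    and eq: "(if x \<in> A then f x else g x) = (if y \<in> A then f y else g y)"
  consider "x \<in> A" "y \<in> A" | "x \<in> A" "y \<notin> A" | "x \<notin> A" "y \<in> A" | "x \<notin> A" "y \<notin> A"
    by blast
  then show "x = y"
  proof cases
    case 1 then show ?thesis using eq f(1) by (simp add: inj_on_def)
  next
    case 2 then show ?thesis using eq y f(2) g(2) by auto
  next
    case 3 then show ?thesis using eq x f(2) g(2) by auto
  next
    case 4 then show ?thesis using eq x y g(1) by (simp add: inj_on_def)
  qed
qed

text \<open>Halmos--Vaughan induction: split off a critical subset if there is one; otherwise match an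
  arbitrary element and delete its partner from all other neighbourhoods.\<close>
theorem hall_marriage:
  assumes "finite S" "\<forall>s\<in>S. finite (N s)" "hall_condition S N"
  shows "\<exists>f. inj_on f S \<and> (\<forall>s\<in>S. f s \<in> N s)"
  using assms
proof (induction "card S" arbitrary: S N rule: less_induct)
  case less
  note S = less.prems(1) and N = less.prems(2) and hall = less.prems(3)
  show ?case
  proof (cases "\<exists>A\<subseteq>S. A \<noteq> {} \<and> A \<noteq> S \<and> card (\<Union>(N ` A)) \<le> card A")
    case True
    then obtain A where A: "A \<subseteq> S" "A \<noteq> {}" "A \<noteq> S" "card (\<Union>(N ` A)) \<le> card A" by blast
    let ?U = "\<Union>(N ` A)"
    have "card A < card S" "card (S - A) < card S"
      using A S by (auto intro: psubset_card_mono)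
    moreover have "finite A" "finite (S - A)" using A S by (auto intro: finite_subset)
    moreover have "\<forall>s\<in>A. finite (N s)" "\<forall>s\<in>S - A. finite (N s - ?U)" using A(1) N by auto
    ultimately obtain f g
      where f: "inj_on f A" "\<forall>s\<in>A. f s \<in> N s"
        and g: "inj_on g (S - A)" "\<forall>s\<in>S - A. g s \<in> N s - ?U"
      using less.hyps[of A N] less.hyps[of "S - A" "\<lambda>s. N s - ?U"]
        hall_condition_subset[OF hall A(1)] hall_condition_Diff_critical[OF S N hall A(1,4)]
      by blast
    have "inj_on (\<lambda>x. if x \<in> A then f x else g x) (A \<union> (S - A))"
      using f g by (intro inj_on_if_disjoint_images[where U = ?U]) auto
    then have "inj_on (\<lambda>x. if x \<in> A then f x else g x) S" using A(1) by (simp add: Un_absorb1)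
    moreover have "\<forall>s\<in>S. (if s \<in> A then f s else g s) \<in> N s" using f g by auto
    ultimately show ?thesis by blast
  next
    case no_critical: False
    show ?thesis
    proof (cases "S = {}")
      case False
      then obtain a where a: "a \<in> S" by blast
      have "card {a} \<le> card (N a)" using hall a unfolding hall_condition_def by force
      then obtain b where b: "b \<in> N a" by fastforce
      have "card (S - {a}) < card S" by (rule card_Diff1_less[OF S a])
      moreover have "hall_condition (S - {a}) (\<lambda>s. N s - {b})"
        using no_critical by (intro hall_condition_Diff_singleton[OF _ a]) (auto simp: not_le)
      ultimately obtain g where g: "inj_on g (S - {a})" "\<forall>s\<in>S - {a}. g s \<in> N s - {b}"
        using less.hyps[of "S - {a}" "\<lambda>s. N s - {b}"] S N by blast
      have "inj_on (\<lambda>x. if x \<in> {a} then b else g x) ({a} \<union> (S - {a}))"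
        using g by (intro inj_on_if_disjoint_images[where U = "{b}"]) auto
      then have "inj_on (\<lambda>x. if x \<in> {a} then b else g x) S" using a by (simp add: insert_absorb)
      moreover have "\<forall>s\<in>S. (if s \<in> {a} then b else g s) \<in> N s" using b g by auto
      ultimately show ?thesis by blast
    qed simp
  qed
qed

section \<open>Independent sets in well-covered graphs\<close>

definition neighbours :: "('a \<Rightarrow> 'a \<Rightarrow> bool) \<Rightarrow> 'a set \<Rightarrow> 'a set" where
  "neighbours E X = {v. \<exists>x\<in>X. E x v}"

lemma graphD:
  assumes "graph V E"
  shows "finite V" "E u v \<Longrightarrow> u \<in> V" "E u v \<Longrightarrow> v \<in> V" "E u v \<Longrightarrow> E v u" "\<not> E u u"
  using assms unfolding graph_def by simp_all

lemma neighbours_subset: "graph V E \<Longrightarrow> neighbours E X \<subseteq> V"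
  unfolding neighbours_def by (blast dest: graphD(3))

lemma independent_subset: "independent V E S \<Longrightarrow> A \<subseteq> S \<Longrightarrow> independent V E A"
  unfolding independent_def by blast

lemma finite_independent_sets:
  assumes "graph V E"
  shows "finite {S. independent V E S}"
proof (rule finite_subset)
  show "{S. independent V E S} \<subseteq> Pow V" by (auto simp: independent_def)
  show "finite (Pow V)" using graphD(1)[OF assms] by simp
qed

lemma independent_finite: "graph V E \<Longrightarrow> independent V E S \<Longrightarrow> finite S"
  unfolding independent_def by (blast dest: graphD(1) intro: finite_subset)

lemma independent_Un_Diff_neighbours:
  assumes G: "graph V E" and A: "independent V E A" and B: "independent V E B"
  shows "independent V E (A \<union> (B - neighbours E A))"
proof -
  have "\<not> E u v" if "u \<in> A" "v \<in> B - neighbours E A" for u v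
    using that unfolding neighbours_def by blast
  then show ?thesis
    using A B graphD(4)[OF G] unfolding independent_def by blast
qed

lemma ex_max_independent_superset:
  assumes G: "graph V E" and S: "independent V E S"
  shows "\<exists>T. max_independent V E T \<and> S \<subseteq> T"
proof -
  let ?F = "{T. independent V E T \<and> S \<subseteq> T}"
  have "finite ?F" using finite_independent_sets[OF G] by (rule rev_finite_subset) blast
  then obtain T where "T \<in> ?F" "\<forall>T'\<in>?F. T \<subseteq> T' \<longrightarrow> T = T'"
    using finite_has_maximal2[of ?F S] S by blast
  then show ?thesis unfolding max_independent_def by blast
qed

lemma ex_max_independent: "graph V E \<Longrightarrow> \<exists>S. max_independent V E S"
  using ex_max_independent_superset[of V E "{}"] by (auto simp: independent_def)

lemma ex_dominating_independent_subset:
  assumes G: "graph V E" and X: "X \<subseteq> V"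
  shows "\<exists>J. independent V E J \<and> J \<subseteq> X \<and> X \<subseteq> J \<union> neighbours E J"
proof -
  let ?F = "{J. independent V E J \<and> J \<subseteq> X}"
  have "finite ?F" using finite_independent_sets[OF G] by (rule rev_finite_subset) blast
  then obtain J where J: "J \<in> ?F" and J_max: "\<forall>J'\<in>?F. J \<subseteq> J' \<longrightarrow> J = J'"
    using finite_has_maximal2[of ?F "{}"] by (auto simp: independent_def)
  have "x \<in> J \<union> neighbours E J" if x: "x \<in> X" for x
  proof (rule ccontr)
    assume x_new: "x \<notin> J \<union> neighbours E J"
    have "independent V E (insert x J)"
      using J x X x_new graphD(4,5)[OF G] unfolding independent_def neighbours_def by blast
    then show False using J_max J x x_new by blast
  qed
  then show ?thesis using J by blast
qed

lemma well_covered_card_le: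
  assumes G: "graph V E" and W: "well_covered V E"
    and T: "max_independent V E T" and S: "independent V E S"
  shows "card S \<le> card T"
proof -
  obtain T' where T': "max_independent V E T'" "S \<subseteq> T'"
    using ex_max_independent_superset[OF G S] by blast
  have "card S \<le> card T'"
    using T' independent_finite[OF G] card_mono unfolding max_independent_def by blast
  also have "\<dots> = card T" using W T T'(1) unfolding well_covered_def by blast
  finally show ?thesis .
qed

lemma well_covered_card_max_independent:
  assumes G: "graph V E" and W: "well_covered V E" and S: "max_independent V E S"
  shows "card S = independence_number V E"
  unfolding independence_number_def
  using finite_independent_sets[OF G] well_covered_card_le[OF G W S] S
  by (intro Max_eqI[symmetric]) (auto simp: max_independent_def)

text \<open>Replacing I \<inter> N(J) by J in a maximal extension K of I keeps it independent; since all
  maximal extensions have size |K|, at most |J| vertices can have been removed.\<close>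
lemma well_covered_exchange:
  assumes G: "graph V E" and W: "well_covered V E"
    and I: "independent V E I" and J: "independent V E J"
    and dom: "neighbours E I \<subseteq> J \<union> neighbours E J"
  shows "card (I \<inter> neighbours E J) \<le> card J"
proof -
  obtain K where K: "max_independent V E K" "I \<subseteq> K"
    using ex_max_independent_superset[OF G I] by blast
  have "independent V E (J \<union> (K - neighbours E J))"
    using K(1) by (intro independent_Un_Diff_neighbours[OF G J]) (simp add: max_independent_def)
  then obtain Y where Y: "max_independent V E Y" "J \<union> (K - neighbours E J) \<subseteq> Y"
    using ex_max_independent_superset[OF G] by blast
  have Y_indep: "independent V E Y" using Y(1) by (simp add: max_independent_def)
  define R where "R = Y - I - neighbours E I"
  have "independent V E (I \<union> (Y - neighbours E I))"
    by (rule independent_Un_Diff_neighbours[OF G I Y_indep])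
  then have R_indep: "independent V E (I \<union> R)" unfolding R_def by (rule independent_subset) blast
  have fin: "finite I" "finite J" "finite R"
    using independent_finite[OF G] I J R_indep by (auto dest: independent_subset)
  have "card I + card R = card (I \<union> R)" using fin by (intro card_Un_disjoint[symmetric]) (auto simp: R_def)
  also have "\<dots> \<le> card K" by (rule well_covered_card_le[OF G W K(1) R_indep])
  finally have R_card: "card I + card R \<le> card K" .
  have "Y \<inter> neighbours E J = {}"
    using Y Y_indep unfolding independent_def neighbours_def by blast
  then have "Y \<subseteq> J \<union> (I - neighbours E J) \<union> R" using dom unfolding R_def by blast
  then have "card Y \<le> card J + card (I - neighbours E J) + card R"
    using fin by (metis card_Un_le card_mono finite_Diff finite_UnI order_trans add_le_mono1)
  moreover have "card Y = card K" using W Y(1) K(1) unfolding well_covered_def by blast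
  moreover have "card I = card (I \<inter> neighbours E J) + card (I - neighbours E J)"
    using card_Int_Diff[OF fin(1)] .
  ultimately show ?thesis using R_card by linarith
qed

text \<open>Hall's condition for independent sets; the induction removes from I the vertices
  adjacent to a dominating independent subset J of N(I).\<close>
lemma well_covered_card_le_card_neighbours:
  assumes G: "graph V E" and W: "well_covered V E" and NI: "no_isolated V E"
  shows "independent V E I \<Longrightarrow> card I \<le> card (neighbours E I)"
proof (induction "card I" arbitrary: I rule: less_induct)
  case less
  note I = less.prems
  show ?case
  proof (cases "I = {}")
    case False
    then obtain i where i: "i \<in> I" by blast
    then obtain u where "E i u" using I NI unfolding independent_def no_isolated_def by blast
    then have u: "u \<in> neighbours E I" using i unfolding neighbours_def by blast
    obtain J where J: "independent V E J" "J \<subseteq> neighbours E I"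
        "neighbours E I \<subseteq> J \<union> neighbours E J"
      using ex_dominating_independent_subset[OF G neighbours_subset[OF G]] by blast
    have "J \<noteq> {}" using u J(3) unfolding neighbours_def by blast
    then have "I \<inter> neighbours E J \<noteq> {}"
      using J(2) graphD(4)[OF G] unfolding neighbours_def by blast
    let ?A = "I - neighbours E J"
    have fin: "finite I" "finite (neighbours E I)"
      using independent_finite[OF G I] neighbours_subset[OF G] graphD(1)[OF G]
      by (auto intro: finite_subset)
    have split: "card I = card (I \<inter> neighbours E J) + card ?A" by (rule card_Int_Diff[OF fin(1)])
    then have "card ?A < card I" using \<open>I \<inter> _ \<noteq> {}\<close> fin(1) by auto
    then have "card ?A \<le> card (neighbours E ?A)"
      using less.hyps independent_subset[OF I] by blast
    also have "\<dots> \<le> card (neighbours E I - J)"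
      using fin(2) graphD(4)[OF G] by (intro card_mono) (auto simp: neighbours_def)
    also have "\<dots> = card (neighbours E I) - card J"
      using J(2) fin(2) by (meson card_Diff_subset finite_subset)
    finally show ?thesis
      using split well_covered_exchange[OF G W I J(1,3)] card_mono[OF fin(2) J(2)] by linarith
  qed simp
qed

lemma perfect_matching_of_injection:
  assumes G: "graph V E" and S: "independent V E S"
    and f: "inj_on f S" "\<forall>s\<in>S. E s (f s)" and card_V: "card V = 2 * card S"
  shows "perfect_matching V E ((\<lambda>s. {s, f s}) ` S)"
  unfolding perfect_matching_def
proof (intro conjI)
  have S_sub: "S \<subseteq> V" and f_out: "f ` S \<subseteq> V - S"
    using S f(2) graphD(3)[OF G] unfolding independent_def by auto
  have "card (f ` S) = card (V - S)"
    using card_image[OF f(1)] card_Diff_subset[OF _ S_sub] independent_finite[OF G S] card_V by simp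
  then have "f ` S = V - S" using f_out graphD(1)[OF G] by (simp add: card_subset_eq)
  then show "\<Union>((\<lambda>s. {s, f s}) ` S) = V" using S_sub by auto
  show "disjoint ((\<lambda>s. {s, f s}) ` S)"
    using f f_out unfolding disjoint_def inj_on_def by fastforce
qed (use f(2) in blast)

lemma very_well_covered_ex_perfect_matching:
  assumes G: "graph V E" and VW: "very_well_covered V E"
  shows "\<exists>M. perfect_matching V E M"
proof -
  have W: "well_covered V E" and NI: "no_isolated V E"
    and alpha: "2 * independence_number V E = card V"
    using VW unfolding very_well_covered_def by auto
  obtain S where S: "max_independent V E S" using ex_max_independent[OF G] by blast
  have S_indep: "independent V E S" using S by (simp add: max_independent_def)
  have "hall_condition S (\<lambda>s. {t. E s t})"
    unfolding hall_condition_def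
  proof (intro allI impI)
    fix A assume "A \<subseteq> S"
    then have "card A \<le> card (neighbours E A)"
      using well_covered_card_le_card_neighbours[OF G W NI] independent_subset[OF S_indep] by blast
    moreover have "\<Union>((\<lambda>s. {t. E s t}) ` A) = neighbours E A" unfolding neighbours_def by auto
    ultimately show "card A \<le> card (\<Union>((\<lambda>s. {t. E s t}) ` A))" by simp
  qed
  moreover have "finite {t. E s t}" for s
    using graphD(1,3)[OF G] by (auto intro: finite_subset)
  ultimately obtain f where "inj_on f S" "\<forall>s\<in>S. E s (f s)"
    using hall_marriage[of S "\<lambda>s. {t. E s t}"] independent_finite[OF G S_indep] by auto
  moreover have "card V = 2 * card S"
    using well_covered_card_max_independent[OF G W S] alpha by simp
  ultimately show ?thesis using perfect_matching_of_injection[OF G S_indep] by blast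
qed

section \<open>Perfect matchings and strong cliques\<close>

lemma perfect_matching_edge:
  assumes G: "graph V E" and M: "perfect_matching V E M" and e: "e \<in> M"
  shows "card e = 2" "finite e" "clique V E e"
proof -
  obtain u v where uv: "e = {u, v}" "E u v" using M e unfolding perfect_matching_def by blast
  moreover have "u \<noteq> v" using uv(2) graphD(5)[OF G] by metis
  ultimately show "card e = 2" "finite e" by simp_all
  show "clique V E e" using uv graphD(2-4)[OF G] unfolding clique_def by auto
qed

lemma perfect_matching_iff_partition_2_cliques:
  assumes G: "graph V E"
  shows "perfect_matching V E P \<longleftrightarrow> partition_on V P \<and> (\<forall>C\<in>P. clique V E C \<and> card C = 2)"
proof
  assume M: "perfect_matching V E P"
  then show "partition_on V P \<and> (\<forall>C\<in>P. clique V E C \<and> card C = 2)"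
    using perfect_matching_edge[OF G M] unfolding perfect_matching_def partition_on_def by force
next
  assume P: "partition_on V P \<and> (\<forall>C\<in>P. clique V E C \<and> card C = 2)"
  have "\<exists>u v. C = {u, v} \<and> E u v" if "C \<in> P" for C
    using P that unfolding clique_def by (metis card_2_iff insertCI)
  then show "perfect_matching V E P" using P unfolding perfect_matching_def partition_on_def by blast
qed

lemma perfect_matching_finite:
  assumes G: "graph V E" and M: "perfect_matching V E M"
  shows "finite M"
  using M graphD(1)[OF G] finite_UnionD unfolding perfect_matching_def by blast

lemma card_eq_sum_perfect_matching:
  assumes G: "graph V E" and M: "perfect_matching V E M" and S: "S \<subseteq> V"
  shows "card S = (\<Sum>e\<in>M. card (e \<inter> S))"
proof -
  have "S = (\<Union>e\<in>M. e \<inter> S)" using M S unfolding perfect_matching_def by auto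
  also have "card \<dots> = (\<Sum>e\<in>M. card (e \<inter> S))"
  proof (rule card_UN_disjoint)
    show "finite M" using perfect_matching_finite[OF G M] .
    show "\<forall>e\<in>M. finite (e \<inter> S)" using perfect_matching_edge(2)[OF G M] by blast
    show "\<forall>e\<in>M. \<forall>e'\<in>M. e \<noteq> e' \<longrightarrow> e \<inter> S \<inter> (e' \<inter> S) = {}"
      using M unfolding perfect_matching_def disjoint_def by blast
  qed
  finally show ?thesis .
qed

lemma card_perfect_matching:
  assumes G: "graph V E" and M: "perfect_matching V E M"
  shows "card V = 2 * card M"
proof -
  have "card V = (\<Sum>e\<in>M. card (e \<inter> V))" using card_eq_sum_perfect_matching[OF G M] by blast
  also have "\<dots> = (\<Sum>e\<in>M. 2)"
  proof (rule sum.cong)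
    fix e assume e: "e \<in> M"
    then have "e \<inter> V = e" using M unfolding perfect_matching_def by blast
    then show "card (e \<inter> V) = 2" using perfect_matching_edge(1)[OF G M e] by simp
  qed simp
  finally show ?thesis by simp
qed

lemma card_edge_Int_independent_le_1:
  assumes M: "perfect_matching V E M" and e: "e \<in> M" and S: "independent V E S"
  shows "card (e \<inter> S) \<le> 1"
proof -
  obtain u v where uv: "e = {u, v}" "E u v" using M e unfolding perfect_matching_def by blast
  then obtain w where "e \<inter> S \<subseteq> {w}" using S unfolding independent_def by blast
  then have "card (e \<inter> S) \<le> card {w}" by (intro card_mono) simp_all
  then show ?thesis by simp
qed

text \<open>Each edge of a perfect matching meets an independent set at most once; with
  |S| = |M| edges available, no edge can be missed.\<close>
lemma very_well_covered_perfect_matching_strong: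
  assumes G: "graph V E" and VW: "very_well_covered V E"
    and M: "perfect_matching V E M" and e: "e \<in> M"
  shows "strong_clique V E e"
  unfolding strong_clique_def
proof (intro conjI allI impI)
  show "clique V E e" using perfect_matching_edge(3)[OF G M e] .
  fix S assume S: "max_independent V E S"
  have S_indep: "independent V E S" using S by (simp add: max_independent_def)
  have fM: "finite M" using perfect_matching_finite[OF G M] .
  have "card S = card M"
    using VW well_covered_card_max_independent[OF G _ S] card_perfect_matching[OF G M]
    unfolding very_well_covered_def by simp
  show "e \<inter> S \<noteq> {}"
  proof
    assume e_miss: "e \<inter> S = {}"
    have "card S = (\<Sum>e\<in>M. card (e \<inter> S))"
      using card_eq_sum_perfect_matching[OF G M] S_indep unfolding independent_def by blast
    also have "\<dots> = (\<Sum>e'\<in>M - {e}. card (e' \<inter> S))"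
      using sum.remove[OF fM e, of "\<lambda>e. card (e \<inter> S)"] e_miss by simp
    also have "\<dots> \<le> (\<Sum>e'\<in>M - {e}. 1)"
      using card_edge_Int_independent_le_1[OF M _ S_indep] by (intro sum_mono) simp
    also have "\<dots> < card M" using card_Diff1_less[OF fM e] by simp
    finally show False using \<open>card S = card M\<close> by simp
  qed
qed

lemma strong_perfect_matching_very_well_covered:
  assumes G: "graph V E" and NI: "no_isolated V E" and M: "perfect_matching V E M"
    and strong: "\<forall>e\<in>M. strong_clique V E e"
  shows "very_well_covered V E"
proof -
  have card_S: "card S = card M" if S: "max_independent V E S" for S
  proof -
    have S_indep: "independent V E S" using S by (simp add: max_independent_def)
    have "card S = (\<Sum>e\<in>M. card (e \<inter> S))"
      using card_eq_sum_perfect_matching[OF G M] S_indep unfolding independent_def by blast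
    also have "\<dots> = (\<Sum>e\<in>M. 1)"
    proof (rule sum.cong)
      fix e assume e: "e \<in> M"
      have "e \<inter> S \<noteq> {}" using strong e S unfolding strong_clique_def by blast
      moreover have "finite e" using perfect_matching_edge(2)[OF G M e] .
      ultimately show "card (e \<inter> S) = 1"
        using card_edge_Int_independent_le_1[OF M e S_indep] by (simp add: le_Suc_eq)
    qed simp
    finally show ?thesis by simp
  qed
  then have W: "well_covered V E" unfolding well_covered_def by auto
  obtain S where S: "max_independent V E S" using ex_max_independent[OF G] by blast
  have "2 * independence_number V E = card V"
    using well_covered_card_max_independent[OF G W S] card_S[OF S] card_perfect_matching[OF G M]
    by simp
  then show ?thesis unfolding very_well_covered_def using W NI by blast
qed

theorem mainTheorem5:
  fixes V :: "'a set" and E :: "'a \<Rightarrow> 'a \<Rightarrow> bool"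
  assumes "graph V E" and "no_isolated V E"
  shows "(very_well_covered V E \<longleftrightarrow>
            (\<exists>M. perfect_matching V E M \<and> (\<forall>e\<in>M. strong_clique V E e)))
       \<and> (very_well_covered V E \<longleftrightarrow>
            ((\<exists>M. perfect_matching V E M) \<and>
             (\<forall>M. perfect_matching V E M \<longrightarrow> (\<forall>e\<in>M. strong_clique V E e))))
       \<and> (very_well_covered V E \<longleftrightarrow>
            (\<exists>P. partition_on V P \<and> (\<forall>C\<in>P. strong_clique V E C \<and> card C = 2)))
       \<and> (very_well_covered V E \<longrightarrow> localizable V E)"
proof -
  note G = assms(1) and NI = assms(2)
  have strong_matching: "very_well_covered V E \<longleftrightarrow>
            (\<exists>M. perfect_matching V E M \<and> (\<forall>e\<in>M. strong_clique V E e))"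
    using very_well_covered_ex_perfect_matching[OF G] very_well_covered_perfect_matching_strong[OF G]
      strong_perfect_matching_very_well_covered[OF G NI] by blast
  moreover have "very_well_covered V E \<longleftrightarrow>
            ((\<exists>M. perfect_matching V E M) \<and>
             (\<forall>M. perfect_matching V E M \<longrightarrow> (\<forall>e\<in>M. strong_clique V E e)))"
    using strong_matching very_well_covered_perfect_matching_strong[OF G] by blast
  moreover have partition: "very_well_covered V E \<longleftrightarrow>
            (\<exists>P. partition_on V P \<and> (\<forall>C\<in>P. strong_clique V E C \<and> card C = 2))"
    using strong_matching perfect_matching_iff_partition_2_cliques[OF G]
    unfolding strong_clique_def by blast
  moreover have "very_well_covered V E \<longrightarrow> localizable V E"
    using partition unfolding localizable_def by blast
  ultimately show ?thesis by blast
qed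

end
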